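(* Let $k \ge 1$ and $k \le m < 2k$. The number of Grassmannian involutions of $[m]$ that avoid $\operatorname{id}_k=12\cdots k$ is $\left\lfloor \frac{(2k-m)^2}{4}\right\rfloor$.
   Context: A permutation is Grassmannian if it has at most one descent; a Grassmannian involution is a Grassmannian permutation $\pi$ with $\pi^{-1}=\pi$. A permutation avoids $12\cdots k$ if it has no increasing subsequence of length $k$. *)

theory Defs
  imports "HOL-Combinatorics.Permutations"
begin

text \<open>Permutations of [m] = {1..m} are functions p with p permutes {1..m}.\<close>

definition descents :: "nat \<Rightarrow> (nat \<Rightarrow> nat) \<Rightarrow> nat set" where
  "descents m p = {i. 1 \<le> i \<and> i < m \<and> p i > p (Suc i)}"

definition grassmannian :: "nat \<Rightarrow> (nat \<Rightarrow> nat) \<Rightarrow> bool" where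
  "grassmannian m p \<longleftrightarrow> card (descents m p) \<le> 1"

definition involution :: "(nat \<Rightarrow> nat) \<Rightarrow> bool" where
  "involution p \<longleftrightarrow> inv p = p"

definition contains_incr :: "nat \<Rightarrow> nat \<Rightarrow> (nat \<Rightarrow> nat) \<Rightarrow> bool" where
  "contains_incr m k p \<longleftrightarrow>
     (\<exists>f :: nat \<Rightarrow> nat. f ` {..<k} \<subseteq> {1..m} \<and> strict_mono_on {..<k} f
        \<and> strict_mono_on {..<k} (p \<circ> f))"

definition avoids_incr :: "nat \<Rightarrow> nat \<Rightarrow> (nat \<Rightarrow> nat) \<Rightarrow> bool" where
  "avoids_incr m k p \<longleftrightarrow> \<not> contains_incr m k p"

end

theory Submission
  imports Defs
begin

text \<open>A Grassmannian involution of [m] exchanges two adjacent blocks {a+1..a+b} and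
  {a+b+1..a+2b} of equal length and fixes everything else, so these involutions correspond to
  the pairs (a, b) with a + 2b \<le> m (b = 0 giving the identity). An increasing subsequence can
  meet at most one of the two blocks, so the longest one has length m - b, and avoiding 12...k
  means b > m - k. Counting the pairs with this constraint gives floor((2k - m)^2 / 4).\<close>

lemma strict_mono_on_atLeastAtMostI:
  fixes f :: "nat \<Rightarrow> 'a::order"
  assumes "\<And>i. l \<le> i \<Longrightarrow> i < u \<Longrightarrow> f i < f (Suc i)"
  shows "strict_mono_on {l..u} f"
proof (rule strict_mono_onI)
  fix i j assume "i \<in> {l..u}" "j \<in> {l..u}" "i < j"
  then show "f i < f j"
  proof (induction j)
    case (Suc j)
    then show ?case
      using assms by (cases "i = j") (auto intro: less_trans)
  qed simp
qed

lemma strict_mono_on_interval_translation: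
  fixes f :: "nat \<Rightarrow> nat"
  assumes mono: "strict_mono_on {l..<l + n} f" and into: "f ` {l..<l + n} \<subseteq> {l'..<l' + n}"
    and i: "i \<in> {l..<l + n}"
  shows "f i = l' + (i - l)"
proof -
  have inj: "inj_on f {l..<l + n}"
    using mono by (rule strict_mono_on_imp_inj_on)
  have "f ` {l..<i} \<subseteq> {l'..<f i}"
    using into i by (auto simp: image_subset_iff intro!: strict_mono_onD[OF mono])
  then have "card {l..<i} \<le> card {l'..<f i}"
    by (rule card_inj_on_le[OF inj_on_subset[OF inj], rotated]) (use i in auto)
  then have below: "i - l \<le> f i - l'" by simp
  have "f ` {i<..<l + n} \<subseteq> {f i<..<l' + n}"
    using into i by (auto simp: image_subset_iff intro!: strict_mono_onD[OF mono])
  then have "card {i<..<l + n} \<le> card {f i<..<l' + n}"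
    by (rule card_inj_on_le[OF inj_on_subset[OF inj], rotated]) (use i in auto)
  then have above: "l + n - Suc i \<le> l' + n - Suc (f i)" by simp
  from below above into i show ?thesis by fastforce
qed

lemma permutes_strict_mono_on_eq_id:
  fixes p :: "nat \<Rightarrow> nat"
  assumes "p permutes {l..u}" and "strict_mono_on {l..u} p"
  shows "p = id"
proof
  fix i
  show "p i = id i"
  proof (cases "i \<in> {l..u}")
    case True
    then show ?thesis
      using strict_mono_on_interval_translation[of l "Suc u - l" p l i] assms
      by (simp add: atLeastLessThanSuc_atLeastAtMost permutes_image)
  next
    case False
    then show ?thesis using permutes_not_in[OF assms(1)] by simp
  qed
qed

definition block_swap :: "nat \<Rightarrow> nat \<Rightarrow> nat \<Rightarrow> nat" where
  "block_swap a b i =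
     (if a < i \<and> i \<le> a + b then i + b
      else if a + b < i \<and> i \<le> a + 2 * b then i - b
      else i)"

lemma block_swap_block_swap [simp]: "block_swap a b (block_swap a b i) = i"
  unfolding block_swap_def by auto

lemma block_swap_permutes:
  assumes "a + 2 * b \<le> m"
  shows "block_swap a b permutes {1..m}"
proof (rule inj_imp_permutes)
  show "inj_on (block_swap a b) {1..m}"
    by (metis block_swap_block_swap inj_on_inverseI)
qed (use assms in \<open>auto simp: block_swap_def\<close>)

lemma involution_block_swap: "involution (block_swap a b)"
  unfolding involution_def by (rule inv_equality) simp_all

lemma grassmannian_block_swap: "grassmannian m (block_swap a b)"
proof -
  have "descents m (block_swap a b) \<subseteq> {a + b}"
    unfolding descents_def block_swap_def by (auto split: if_splits)
  then have "card (descents m (block_swap a b)) \<le> card {a + b}"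
    by (rule card_mono[rotated]) simp
  then show ?thesis
    unfolding grassmannian_def by simp
qed

lemma block_swap_inject:
  assumes "1 \<le> b" "1 \<le> b'" "block_swap a b = block_swap a' b'"
  shows "a = a' \<and> b = b'"
proof -
  have at_a: "block_swap a b (Suc a) = block_swap a' b' (Suc a)"
    and at_a': "block_swap a b (Suc a') = block_swap a' b' (Suc a')"
    using assms(3) by simp_all
  have "a = a'"
  proof (rule ccontr)
    assume "a \<noteq> a'"
    then show False
      using at_a at_a' assms(1,2) unfolding block_swap_def by (auto split: if_splits)
  qed
  with at_a assms(1,2) show ?thesis
    unfolding block_swap_def by auto
qed

lemma contains_incr_block_swap_iff:
  assumes "a + 2 * b \<le> m"
  shows "contains_incr m k (block_swap a b) \<longleftrightarrow> k + b \<le> m"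
proof
  assume "contains_incr m k (block_swap a b)"
  then obtain f where f_into: "f ` {..<k} \<subseteq> {1..m}" and f_mono: "strict_mono_on {..<k} f"
    and pf_mono: "strict_mono_on {..<k} (block_swap a b \<circ> f)"
    unfolding contains_incr_def by blast
  define A where "A = {Suc a..a + b}"
  define B where "B = {Suc (a + b)..a + 2 * b}"
  \<comment> \<open>block_swap maps A above B, so an increasing subsequence cannot meet both blocks\<close>
  have not_both: False if "i < k" "j < k" "f i \<in> A" "f j \<in> B" for i j
  proof -
    have "f i < f j" using that by (auto simp: A_def B_def)
    then have "i < j"
      using f_mono that by (metis lessThan_iff linorder_neqE_nat order_less_asym strict_mono_onD)
    then have "block_swap a b (f i) < block_swap a b (f j)"
      using strict_mono_onD[OF pf_mono, of i j] that by simp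
    then show False using that by (auto simp: A_def B_def block_swap_def)
  qed
  have "f ` {..<k} \<subseteq> {1..m} - A \<or> f ` {..<k} \<subseteq> {1..m} - B"
    using not_both f_into by blast
  moreover have "card ({1..m} - A) = m - b" "card ({1..m} - B) = m - b"
    using assms by (subst card_Diff_subset; auto simp: A_def B_def)+
  moreover have "card (f ` {..<k}) = k"
    using card_image[OF strict_mono_on_imp_inj_on[OF f_mono]] by simp
  ultimately have "k \<le> m - b"
    by (metis card_mono finite_Diff finite_atLeastAtMost)
  then show "k + b \<le> m" using assms by simp
next
  assume "k + b \<le> m"
  let ?f = "\<lambda>i. if i < a + b then Suc i else Suc (i + b)"
  have "?f ` {..<k} \<subseteq> {1..m}" "strict_mono_on {..<k} ?f"
    "strict_mono_on {..<k} (block_swap a b \<circ> ?f)"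
    using \<open>k + b \<le> m\<close> assms by (auto intro!: strict_mono_onI simp: block_swap_def)
  then show "contains_incr m k (block_swap a b)"
    unfolding contains_incr_def by blast
qed

text \<open>An involution with a single descent at d: with p (d + 1) = a + 1, it maps the blocks
  {a+1..d} and {d+1..p d} increasingly into each other, so they have the same length b and p
  translates each onto the other. The remaining intervals {1..a} and {p d + 1..m} are then mapped
  increasingly into themselves, so p fixes them pointwise.\<close>

locale two_run_involution =
  fixes m d :: nat and p :: "nat \<Rightarrow> nat"
  assumes permutes: "p permutes {1..m}"
    and involutive: "\<And>x. p (p x) = x"
    and descent: "1 \<le> d" "d < m" "p (Suc d) < p d"
    and first_run: "strict_mono_on {1..d} p"
    and second_run: "strict_mono_on {Suc d..m} p"
begin

definition a :: nat where "a = p (Suc d) - 1"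

definition b :: nat where "b = d - a"

lemma p_range: "x \<in> {1..m} \<Longrightarrow> p x \<in> {1..m}"
  using permutes_in_image[OF permutes] by blast

lemma descent_top: "d < p d"
proof (rule ccontr)
  assume "\<not> d < p d"
  then have "p (Suc d) \<in> {1..d}" "p d \<in> {1..d}"
    using descent p_range[of d] p_range[of "Suc d"] by auto
  then have "p (p (Suc d)) < p (p d)"
    using strict_mono_onD[OF first_run] descent(3) by blast
  then show False using involutive by simp
qed

lemma descent_bottom: "p (Suc d) \<le> d"
proof (rule ccontr)
  assume "\<not> p (Suc d) \<le> d"
  then have "p (Suc d) \<in> {Suc d..m}" "p d \<in> {Suc d..m}"
    using descent_top descent p_range[of d] by auto
  then have "p (p (Suc d)) < p (p d)"
    using strict_mono_onD[OF second_run] descent(3) by blast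
  then show False using involutive by simp
qed

lemma p_Suc_d: "p (Suc d) = Suc a" and a_less: "a < d"
  using descent_bottom p_range[of "Suc d"] descent by (auto simp: a_def)

lemma first_block_into: "p ` {Suc a..d} \<subseteq> {Suc d..p d}"
proof -
  have "p (Suc a) \<le> p i \<and> p i \<le> p d" if "i \<in> {Suc a..d}" for i
    using that a_less by (auto intro!: strict_mono_on_leD[OF first_run])
  then show ?thesis using p_Suc_d involutive by (metis atLeastAtMost_iff image_subsetI)
qed

lemma second_block_into: "p ` {Suc d..p d} \<subseteq> {Suc a..d}"
proof -
  have "p d \<le> m" using p_range[of d] descent by auto
  then have "p (Suc d) \<le> p j \<and> p j \<le> p (p d)" if "j \<in> {Suc d..p d}" for j
    using that by (auto intro!: strict_mono_on_leD[OF second_run])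
  then show ?thesis using p_Suc_d involutive by (metis atLeastAtMost_iff image_subsetI)
qed

lemma p_d: "p d = d + b"
proof -
  have inj: "inj_on p A" for A
    using permutes_inj[OF permutes] by (rule inj_on_subset) simp
  have "card {Suc a..d} \<le> card {Suc d..p d}" "card {Suc d..p d} \<le> card {Suc a..d}"
    using card_inj_on_le[OF inj first_block_into] card_inj_on_le[OF inj second_block_into]
    by simp_all
  then show ?thesis using a_less descent_top by (simp add: b_def)
qed

lemma p_first_block:
  assumes "i \<in> {Suc a..d}"
  shows "p i = i + b"
proof -
  have block: "{Suc a..<Suc a + b} = {Suc a..d}"
    using a_less by (auto simp: b_def)
  have "strict_mono_on {Suc a..<Suc a + b} p"
    unfolding block by (rule monotone_on_subset[OF first_run]) auto
  moreover have "p ` {Suc a..<Suc a + b} \<subseteq> {Suc d..<Suc d + b}"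
    using first_block_into p_d block by auto
  ultimately have "p i = Suc d + (i - Suc a)"
    by (rule strict_mono_on_interval_translation) (use assms block in auto)
  with assms a_less show ?thesis unfolding b_def by (simp only: atLeastAtMost_iff) linarith
qed

lemma p_second_block:
  assumes "j \<in> {Suc d..d + b}"
  shows "p j = j - b"
proof -
  have block: "{Suc d..<Suc d + b} = {Suc d..d + b}"
    by auto
  have "d + b \<le> m"
    using p_d p_range[of d] descent by auto
  then have "strict_mono_on {Suc d..<Suc d + b} p"
    unfolding block by (intro monotone_on_subset[OF second_run]) auto
  moreover have "p ` {Suc d..<Suc d + b} \<subseteq> {Suc a..<Suc a + b}"
    using second_block_into p_d block a_less by (auto simp: b_def)
  ultimately have "p j = Suc a + (j - Suc d)"
    by (rule strict_mono_on_interval_translation) (use assms block in auto)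
  with assms a_less show ?thesis unfolding b_def by (simp only: atLeastAtMost_iff) linarith
qed

lemma p_fixed_below:
  assumes "i \<in> {1..a}"
  shows "p i = i"
proof -
  let ?I = "{1..<1 + a}"
  have "p ` ?I \<subseteq> ?I"
  proof (rule image_subsetI)
    fix x assume x: "x \<in> ?I"
    have "p x < p (Suc a)"
      using x a_less by (intro strict_mono_onD[OF first_run]) auto
    then have "p x \<le> d" using p_Suc_d involutive by (metis less_Suc_eq_le)
    moreover have "\<not> Suc a \<le> p x"
      using p_first_block[of "p x"] involutive x \<open>p x \<le> d\<close> by force
    ultimately show "p x \<in> ?I"
      using p_range[of x] x a_less descent by auto
  qed
  moreover have "strict_mono_on ?I p"
    using a_less by (intro monotone_on_subset[OF first_run]) auto
  moreover have "i \<in> ?I"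
    using assms by auto
  ultimately have "p i = 1 + (i - 1)"
    by (intro strict_mono_on_interval_translation)
  with assms show ?thesis by simp
qed

lemma blocks_fit: "a + 2 * b \<le> m"
  using p_d p_range[of d] descent a_less by (auto simp: b_def)

lemma p_fixed_above:
  assumes "j \<in> {Suc (d + b)..m}"
  shows "p j = j"
proof -
  let ?I = "{Suc (d + b)..<Suc (d + b) + (m - (d + b))}"
  have "p ` ?I \<subseteq> ?I"
  proof (rule image_subsetI)
    fix x assume x: "x \<in> ?I"
    have "p (d + b) < p x"
      using x a_less by (intro strict_mono_onD[OF second_run]) (auto simp: b_def)
    then have "d < p x" using p_d involutive by metis
    moreover have "\<not> p x \<le> d + b"
      using p_second_block[of "p x"] involutive x \<open>d < p x\<close> by force
    ultimately show "p x \<in> ?I"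
      using p_range[of x] x blocks_fit a_less by (auto simp: b_def)
  qed
  moreover have "strict_mono_on ?I p"
    by (intro monotone_on_subset[OF second_run]) auto
  moreover have "j \<in> ?I"
    using assms blocks_fit a_less by (auto simp: b_def)
  ultimately have "p j = Suc (d + b) + (j - Suc (d + b))"
    by (intro strict_mono_on_interval_translation)
  with assms show ?thesis by simp
qed

lemma eq_block_swap: "p = block_swap a b"
proof
  fix i
  consider "i \<notin> {1..m}" | "i \<in> {1..a}" | "i \<in> {Suc a..d}" | "i \<in> {Suc d..d + b}"
    | "i \<in> {Suc (d + b)..m}"
    by force
  then show "p i = block_swap a b i"
  proof cases
    case 1
    then show ?thesis
      using permutes_not_in[OF permutes] blocks_fit by (auto simp: block_swap_def)
  next
    case 2
    then show ?thesis using p_fixed_below by (auto simp: block_swap_def)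
  next
    case 3
    then show ?thesis using p_first_block a_less by (auto simp: block_swap_def b_def)
  next
    case 4
    then show ?thesis using p_second_block a_less by (auto simp: block_swap_def b_def)
  next
    case 5
    then show ?thesis using p_fixed_above a_less by (auto simp: block_swap_def b_def)
  qed
qed

end

lemma grassmannian_involution_iff_block_swap:
  "p permutes {1..m} \<and> grassmannian m p \<and> involution p \<longleftrightarrow>
     (\<exists>a b. a + 2 * b \<le> m \<and> p = block_swap a b)"
proof
  assume "p permutes {1..m} \<and> grassmannian m p \<and> involution p"
  then have permutes: "p permutes {1..m}" and grass: "grassmannian m p"
    and involutive: "\<And>x. p (p x) = x"
    using permutes_inverses(2) unfolding involution_def by metis+
  have ascent: "p i < p (Suc i)" if "1 \<le> i" "i < m" "i \<notin> descents m p" for i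
    using that involutive unfolding descents_def by (metis Suc_n_not_n linorder_neqE_nat mem_Collect_eq)
  have "finite (descents m p)"
    unfolding descents_def by (rule finite_subset[of _ "{..<m}"]) auto
  with grass consider "descents m p = {}" | d where "descents m p = {d}"
    unfolding grassmannian_def by (metis card_1_singletonE card_0_eq le_Suc_eq One_nat_def le_zero_eq)
  then show "\<exists>a b. a + 2 * b \<le> m \<and> p = block_swap a b"
  proof cases
    case 1
    then have "strict_mono_on {1..m} p"
      using ascent by (auto intro: strict_mono_on_atLeastAtMostI)
    then have "p = block_swap 0 0"
      using permutes_strict_mono_on_eq_id[OF permutes] by (auto simp: block_swap_def)
    then show ?thesis by (intro exI[of _ 0]) simp
  next
    case (2 d)
    then have descent: "1 \<le> d" "d < m" "p (Suc d) < p d"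
      unfolding descents_def by auto
    have "strict_mono_on {1..d} p" "strict_mono_on {Suc d..m} p"
      using ascent 2 descent(2) by (auto intro!: strict_mono_on_atLeastAtMostI)
    with descent interpret two_run_involution m d p
      using permutes involutive by unfold_locales
    show ?thesis using blocks_fit eq_block_swap by blast
  qed
next
  assume "\<exists>a b. a + 2 * b \<le> m \<and> p = block_swap a b"
  then show "p permutes {1..m} \<and> grassmannian m p \<and> involution p"
    using block_swap_permutes grassmannian_block_swap involution_block_swap by blast
qed

lemma Suc_square_div_four: "(Suc n)\<^sup>2 div 4 = n\<^sup>2 div 4 + Suc n div 2"
proof (cases "even n")
  case True
  then obtain r where "n = 2 * r" by blast
  then show ?thesis by (simp add: power2_eq_square algebra_simps)
next
  case False
  then obtain r where "n = 2 * r + 1" using oddE by blast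
  then show ?thesis by (simp add: power2_eq_square algebra_simps)
qed

lemma card_pairs_below: "card {(a, b). a + 2 * b + 2 \<le> (n::nat)} = n\<^sup>2 div 4"
proof (induction n)
  case (Suc n)
  let ?old = "{(a, b). a + 2 * b + 2 \<le> n}"
  let ?layer = "(\<lambda>b. (n - 1 - 2 * b, b)) ` {..<Suc n div 2}"
  have "{(a, b). a + 2 * b + 2 \<le> Suc n} = ?old \<union> ?layer"
    by (auto simp: image_iff)
  moreover have "finite ?old"
    by (rule finite_subset[of _ "{..n} \<times> {..n}"]) auto
  moreover have "?old \<inter> ?layer = {}" "card ?layer = Suc n div 2"
    by (auto simp: card_image inj_on_def)
  ultimately show ?case
    using Suc.IH by (simp add: card_Un_disjoint Suc_square_div_four)
qed simp

lemma avoiding_grassmannian_involutions_eq: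
  "{p. p permutes {1..m} \<and> grassmannian m p \<and> involution p \<and> avoids_incr m k p}
     = {block_swap a b | a b. a + 2 * b \<le> m \<and> m < k + b}"
proof (intro equalityI subsetI)
  fix p assume "p \<in> {p. p permutes {1..m} \<and> grassmannian m p \<and> involution p \<and> avoids_incr m k p}"
  then obtain a b where "a + 2 * b \<le> m" "p = block_swap a b" "avoids_incr m k p"
    using grassmannian_involution_iff_block_swap by blast
  then show "p \<in> {block_swap a b | a b. a + 2 * b \<le> m \<and> m < k + b}"
    using contains_incr_block_swap_iff by (auto simp: avoids_incr_def not_le)
next
  fix p assume "p \<in> {block_swap a b | a b. a + 2 * b \<le> m \<and> m < k + b}"
  then obtain a b where "a + 2 * b \<le> m" "m < k + b" "p = block_swap a b" by blast
  then show "p \<in> {p. p permutes {1..m} \<and> grassmannian m p \<and> involution p \<and> avoids_incr m k p}"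
    using grassmannian_involution_iff_block_swap contains_incr_block_swap_iff
    by (auto simp: avoids_incr_def)
qed

lemma card_block_swaps:
  assumes "1 \<le> t"
  shows "card {block_swap a b | a b. a + 2 * b \<le> m \<and> t \<le> b} = (m + 2 - 2 * t)\<^sup>2 div 4"
proof -
  let ?I = "{(a, b). a + 2 * b + 2 \<le> m + 2 - 2 * t}"
  let ?swap = "\<lambda>(a, b). block_swap a (b + t)"
  have "{block_swap a b | a b. a + 2 * b \<le> m \<and> t \<le> b} = ?swap ` ?I"
  proof (intro equalityI subsetI)
    fix p assume "p \<in> {block_swap a b | a b. a + 2 * b \<le> m \<and> t \<le> b}"
    then obtain a b where "a + 2 * b \<le> m" "t \<le> b" "p = block_swap a b" by blast
    then show "p \<in> ?swap ` ?I"
      by (intro rev_image_eqI[of "(a, b - t)"]) auto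
  next
    fix p assume "p \<in> ?swap ` ?I"
    then obtain a b where "a + 2 * b + 2 \<le> m + 2 - 2 * t" "p = block_swap a (b + t)" by auto
    moreover have "a + 2 * (b + t) \<le> m" "t \<le> b + t"
      using calculation(1) by simp_all
    ultimately show "p \<in> {block_swap a b | a b. a + 2 * b \<le> m \<and> t \<le> b}"
      by blast
  qed
  moreover have "inj_on ?swap ?I"
  proof (rule inj_onI, clarify)
    fix a b a' b' assume "block_swap a (b + t) = block_swap a' (b' + t)"
    moreover have "1 \<le> b + t" "1 \<le> b' + t"
      using assms by simp_all
    ultimately have "a = a' \<and> b + t = b' + t"
      by (intro block_swap_inject)
    then show "a = a' \<and> b = b'" by simp
  qed
  ultimately have "card {block_swap a b | a b. a + 2 * b \<le> m \<and> t \<le> b} = card ?I"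
    by (simp add: card_image)
  also have "\<dots> = (m + 2 - 2 * t)\<^sup>2 div 4"
    by (rule card_pairs_below)
  finally show ?thesis .
qed

theorem mainTheorem18:
  fixes k m :: nat
  assumes "k \<ge> 1" and "k \<le> m" and "m < 2 * k"
  shows "card {p. p permutes {1..m} \<and> grassmannian m p \<and> involution p \<and> avoids_incr m k p}
           = (2 * k - m)^2 div 4"
proof -
  have "m < k + b \<longleftrightarrow> m + 1 - k \<le> b" for b
    by arith
  then have "{p. p permutes {1..m} \<and> grassmannian m p \<and> involution p \<and> avoids_incr m k p}
          = {block_swap a b | a b. a + 2 * b \<le> m \<and> m + 1 - k \<le> b}"
    by (simp only: avoiding_grassmannian_involutions_eq)
  moreover have "m + 2 - 2 * (m + 1 - k) = 2 * k - m"
    using assms by simp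
  ultimately show ?thesis
    using card_block_swaps[of "m + 1 - k" m] assms by simp
qed

end
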